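(* Let $a\in\mathcal A$. If area $a$'s decentralized DC-OPF problem has a feasible solution with $T_{a,(i,j)}=0$ for all $(i,j)\in\mathcal T_a$, then for each tieline $(i,j)\in\mathcal T_a$ there exists a critical price $\bar\mu_{(i,j)}>0$ such that whenever $\mu_{(i,j)}\ge\bar\mu_{(i,j)}$, the optimal solution of the decentralized DC-OPF problem has $T_{a,(i,j)}=0$.
   Context: Area $a$ of a multi-area power system has buses $\mathcal N_a$, internal lines $\mathcal F_a$ with reactances $x_{a,(i,j)}>0$ and limits $\overline F_{a,(i,j)}$, voltage angles $\theta_a$, known loads $D_a$, admittance matrix $B_a$, generators $\mathcal G_a$ with outputs $P_a$, limits $\underline P_a,\overline P_a$, incidence matrix $M_a$ and strictly convex cost functions $C_{a,g}$. Its tielines form the set $\mathcal T_a$ of pairs $(i,j)$ with $i$ a bus of $a$ and $j$ a bus of another area $a'$; flows $T_{a,(i,j)}$ (vector $T_a$, incidence matrix $R_a$), reactances $\bar x_{a,(i,j)}$, capacities $\bar T_{a,(i,j)}$. Given parameters $\alpha_{a',j}$, $\theta_{a',j}$ for each $(i,j)\in\mathcal T_a$ and capacity prices $\mu_{(i,j)}\ge 0$, the decentralized DC-OPF of area $a$ is: minimize $\sum_{g\in\mathcal G_a}C_{a,g}(P_{a,g})-\sum_{(i,j)\in\mathcal T_a}\alpha_{a',j}T_{a,(i,j)}+\sum_{(i,j)\in\mathcal T_a}\frac{\mu_{(i,j)}}{2}(|T_{a,(i,j)}|-\bar T_{a,(i,j)})$ over $P_a,\theta_a,T_a$ subject to $B_a\theta_a+R_aT_a=M_aP_a-D_a$,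 $\underline P_a\le P_a\le\overline P_a$, $-\overline F_{a,(i,j)}\le(\theta_{a,i}-\theta_{a,j})/x_{a,(i,j)}\le\overline F_{a,(i,j)}$ for $(i,j)\in\mathcal F_a$, $T_{a,(i,j)}=(\theta_{a,i}-\theta_{a',j})/\bar x_{a,(i,j)}$ for $(i,j)\in\mathcal T_a$, and $\theta_{a,1}=0$ if $a=1$. *)

theory Defs
  imports "HOL-Analysis.Analysis"
begin

definition strictly_convex_on :: "real set \<Rightarrow> (real \<Rightarrow> real) \<Rightarrow> bool" where
  "strictly_convex_on S f \<longleftrightarrow>
     (\<forall>x\<in>S. \<forall>y\<in>S. x \<noteq> y \<longrightarrow> (\<forall>u::real. 0 < u \<and> u < 1 \<longrightarrow>
        f (u * x + (1 - u) * y) < u * f x + (1 - u) * f y))"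

text \<open>Buses are of type 'b
  (global bus names, so external buses j of tielines have the same type),
  generators of type 'g.\<close>
record ('b, 'g) area =
  buses :: "'b set"
  lines :: "('b \<times> 'b) set"
  react :: "'b \<times> 'b \<Rightarrow> real"
  flim :: "'b \<times> 'b \<Rightarrow> real"
  load :: "'b \<Rightarrow> real"
  gens :: "'g set"
  gbus :: "'g \<Rightarrow> 'b"                    (* bus of generator, encodes M_a *)
  pmin :: "'g \<Rightarrow> real"
  pmax :: "'g \<Rightarrow> real"
  cost :: "'g \<Rightarrow> real \<Rightarrow> real"
  ties :: "('b \<times> 'b) set"
  tie_react :: "'b \<times> 'b \<Rightarrow> real"
  tie_cap :: "'b \<times> 'b \<Rightarrow> real"
  is_area1 :: bool
  bus1 :: 'b                            (* bus 1 of area a (reference bus) *)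

definition well_formed :: "('b, 'g) area \<Rightarrow> bool" where
  "well_formed A \<longleftrightarrow>
     finite (buses A) \<and> finite (lines A) \<and> finite (gens A) \<and> finite (ties A) \<and>
     lines A \<subseteq> buses A \<times> buses A \<and> (\<forall>(i,j)\<in>lines A. i \<noteq> j) \<and>
     (\<forall>l\<in>lines A. react A l > 0) \<and>
     (\<forall>g\<in>gens A. gbus A g \<in> buses A) \<and>
     (\<forall>(i,j)\<in>ties A. i \<in> buses A \<and> j \<notin> buses A) \<and>
     (\<forall>l\<in>ties A. tie_react A l > 0) \<and>
     (\<forall>g\<in>gens A. strictly_convex_on UNIV (cost A g)) \<and>
     bus1 A \<in> buses A"

definition admittance :: "('b, 'g) area \<Rightarrow> 'b \<Rightarrow> 'b \<Rightarrow> real" where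
  "admittance A n m =
     (if n = m then (\<Sum>l\<in>{l\<in>lines A. fst l = n \<or> snd l = n}. 1 / react A l)
      else - (\<Sum>l\<in>{l\<in>lines A. l = (n, m) \<or> l = (m, n)}. 1 / react A l))"

text \<open>Feasibility for the decentralized DC-OPF of area A, given the external
  angles thext j = theta_{a',j}.\<close>
definition feasible ::
  "('b, 'g) area \<Rightarrow> ('b \<Rightarrow> real) \<Rightarrow> ('g \<Rightarrow> real) \<Rightarrow> ('b \<Rightarrow> real) \<Rightarrow> ('b \<times> 'b \<Rightarrow> real) \<Rightarrow> bool" where
  "feasible A thext P \<theta> T \<longleftrightarrow>
     (\<forall>n\<in>buses A.
        (\<Sum>m\<in>buses A. admittance A n m * \<theta> m) + (\<Sum>l\<in>{l\<in>ties A. fst l = n}. T l)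
        = (\<Sum>g\<in>{g\<in>gens A. gbus A g = n}. P g) - load A n) \<and>
     (\<forall>g\<in>gens A. pmin A g \<le> P g \<and> P g \<le> pmax A g) \<and>
     (\<forall>(i,j)\<in>lines A. - flim A (i,j) \<le> (\<theta> i - \<theta> j) / react A (i,j) \<and>
                        (\<theta> i - \<theta> j) / react A (i,j) \<le> flim A (i,j)) \<and>
     (\<forall>(i,j)\<in>ties A. T (i,j) = (\<theta> i - thext j) / tie_react A (i,j)) \<and>
     (is_area1 A \<longrightarrow> \<theta> (bus1 A) = 0)"

definition objective ::
  "('b, 'g) area \<Rightarrow> ('b \<Rightarrow> real) \<Rightarrow> ('b \<times> 'b \<Rightarrow> real) \<Rightarrow> ('g \<Rightarrow> real) \<Rightarrow> ('b \<times> 'b \<Rightarrow> real) \<Rightarrow> real" where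
  "objective A alpha mu P T =
     (\<Sum>g\<in>gens A. cost A g (P g))
     - (\<Sum>(i,j)\<in>ties A. alpha j * T (i,j))
     + (\<Sum>l\<in>ties A. mu l / 2 * (\<bar>T l\<bar> - tie_cap A l))"

definition optimal ::
  "('b, 'g) area \<Rightarrow> ('b \<Rightarrow> real) \<Rightarrow> ('b \<Rightarrow> real) \<Rightarrow> ('b \<times> 'b \<Rightarrow> real) \<Rightarrow>
   ('g \<Rightarrow> real) \<Rightarrow> ('b \<Rightarrow> real) \<Rightarrow> ('b \<times> 'b \<Rightarrow> real) \<Rightarrow> bool" where
  "optimal A alpha thext mu P \<theta> T \<longleftrightarrow>
     feasible A thext P \<theta> T \<and>
     (\<forall>P' \<theta>' T'. feasible A thext P' \<theta>' T' \<longrightarrow>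
        objective A alpha mu P T \<le> objective A alpha mu P' T')"

end

(*
  Exact penalty argument.  Eliminating the tieline flows through their defining
  equations, the feasible set of the area is a polyhedron in the variables (P, theta),
  and by hypothesis it meets the hyperplane T_e = 0.  Hoffman's error bound, proved
  here by Fourier-Motzkin elimination of one coordinate at a time, gives a constant C
  such that every feasible point lies within C |T_e| of a feasible point with T_e = 0.
  Convex costs are Lipschitz on the box [pmin, pmax], so moving to that point changes
  all other terms of the objective by at most L C |T_e|, while the penalty term of e
  drops by mu_e |T_e| / 2.  Hence T_e = 0 at every optimum once mu_e > 2 L C.
*)

theory Submission
  imports Defs
begin

section \<open>Hoffman's error bound\<close>

lemma finite_uniform_bound:
  fixes P :: "'a \<Rightarrow> real \<Rightarrow> bool"
  assumes "finite I"
    and "\<forall>i\<in>I. \<exists>c\<ge>0. P i c"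
    and mono: "\<And>i c c'. P i c \<Longrightarrow> c \<le> c' \<Longrightarrow> P i c'"
  shows "\<exists>c\<ge>0. \<forall>i\<in>I. P i c"
  using assms(1,2)
proof (induction I rule: finite_induct)
  case (insert i I)
  then obtain c1 c2 where "0 \<le> c1" "P i c1" "0 \<le> c2" "\<forall>j\<in>I. P j c2"
    by auto
  then show ?case
    by (intro exI[of _ "max c1 c2"]) (auto intro: mono)
qed auto

definition coord_affine :: "'i set \<Rightarrow> (('i \<Rightarrow> real) \<Rightarrow> real) \<Rightarrow> bool" where
  "coord_affine S f \<longleftrightarrow> (\<exists>a b. \<forall>x. f x = (\<Sum>j\<in>S. a j * x j) + b)"

lemma coord_affine_const: "coord_affine S (\<lambda>x. c)"
  unfolding coord_affine_def by (intro exI[of _ "\<lambda>_. 0"] exI[of _ c]) simp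

lemma coord_affine_coord:
  assumes "finite S" "k \<in> S"
  shows "coord_affine S (\<lambda>x. x k)"
proof -
  have "x k = (\<Sum>j\<in>S. (if j = k then 1 else 0) * x j) + 0" for x :: "'a \<Rightarrow> real"
  proof -
    have "(\<Sum>j\<in>S. (if j = k then 1 else 0) * x j) = (\<Sum>j\<in>S. if j = k then x k else 0)"
      by (rule sum.cong) auto
    then show ?thesis
      using assms by simp
  qed
  then show ?thesis
    unfolding coord_affine_def by (intro exI[of _ "\<lambda>j. if j = k then 1 else 0"] exI[of _ 0]) blast
qed

lemma coord_affine_add:
  assumes "coord_affine S f" "coord_affine S g"
  shows "coord_affine S (\<lambda>x. f x + g x)"
proof -
  obtain a b c d where "\<forall>x. f x = (\<Sum>j\<in>S. a j * x j) + b" "\<forall>x. g x = (\<Sum>j\<in>S. c j * x j) + d"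
    using assms unfolding coord_affine_def by blast
  then show ?thesis
    unfolding coord_affine_def
    by (intro exI[of _ "\<lambda>j. a j + c j"] exI[of _ "b + d"]) (simp add: distrib_right sum.distrib)
qed

lemma coord_affine_scale:
  assumes "coord_affine S f"
  shows "coord_affine S (\<lambda>x. c * f x)"
proof -
  obtain a b where "\<forall>x. f x = (\<Sum>j\<in>S. a j * x j) + b"
    using assms unfolding coord_affine_def by blast
  then show ?thesis
    unfolding coord_affine_def
    by (intro exI[of _ "\<lambda>j. c * a j"] exI[of _ "c * b"])
      (simp add: distrib_left sum_distrib_left mult.assoc)
qed

lemma coord_affine_uminus: "coord_affine S f \<Longrightarrow> coord_affine S (\<lambda>x. - f x)"
  using coord_affine_scale[of S f "-1"] by simp

lemma coord_affine_diff:
  "coord_affine S f \<Longrightarrow> coord_affine S g \<Longrightarrow> coord_affine S (\<lambda>x. f x - g x)"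
  using coord_affine_add[OF _ coord_affine_uminus] by simp

lemma coord_affine_divide: "coord_affine S f \<Longrightarrow> coord_affine S (\<lambda>x. f x / c)"
  using coord_affine_scale[of S f "1 / c"] by simp

lemma coord_affine_sum:
  assumes "finite I" "\<forall>i\<in>I. coord_affine S (f i)"
  shows "coord_affine S (\<lambda>x. \<Sum>i\<in>I. f i x)"
  using assms
  by (induction I rule: finite_induct) (auto intro: coord_affine_add coord_affine_const)

lemma coord_affine_cong:
  assumes "coord_affine S f" "\<forall>j\<in>S. x j = y j"
  shows "f x = f y"
proof -
  obtain a b where "\<forall>x. f x = (\<Sum>j\<in>S. a j * x j) + b"
    using assms(1) unfolding coord_affine_def by blast
  then show ?thesis
    using assms(2) by (simp cong: sum.cong)
qed

lemma coord_affine_insert: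
  assumes "coord_affine (insert k S) f" "finite S" "k \<notin> S"
  shows "\<exists>r c. coord_affine S r \<and> (\<forall>x. f x = r x + c * x k)"
proof -
  obtain a b where "\<forall>x. f x = (\<Sum>j\<in>insert k S. a j * x j) + b"
    using assms(1) unfolding coord_affine_def by blast
  then have "\<forall>x. f x = ((\<Sum>j\<in>S. a j * x j) + b) + a k * x k"
    using assms(2,3) by simp
  then show ?thesis
    unfolding coord_affine_def by fast
qed

lemma coord_affine_lipschitz:
  assumes "finite I" "\<forall>i\<in>I. coord_affine S (f i)"
  shows "\<exists>c\<ge>0. \<forall>i\<in>I. \<forall>x y \<delta>. 0 \<le> \<delta> \<longrightarrow> (\<forall>j\<in>S. \<bar>x j - y j\<bar> \<le> \<delta>) \<longrightarrow> \<bar>f i x - f i y\<bar> \<le> c * \<delta>"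
proof (rule finite_uniform_bound[OF assms(1)])
  show "\<forall>i\<in>I. \<exists>c\<ge>0. \<forall>x y \<delta>. 0 \<le> \<delta> \<longrightarrow> (\<forall>j\<in>S. \<bar>x j - y j\<bar> \<le> \<delta>) \<longrightarrow> \<bar>f i x - f i y\<bar> \<le> c * \<delta>"
  proof
    fix i assume "i \<in> I"
    then obtain a b where f: "\<forall>x. f i x = (\<Sum>j\<in>S. a j * x j) + b"
      using assms(2) unfolding coord_affine_def by blast
    have "\<bar>f i x - f i y\<bar> \<le> (\<Sum>j\<in>S. \<bar>a j\<bar>) * \<delta>" if "\<forall>j\<in>S. \<bar>x j - y j\<bar> \<le> \<delta>" for x y \<delta>
    proof -
      have "\<bar>f i x - f i y\<bar> = \<bar>\<Sum>j\<in>S. a j * (x j - y j)\<bar>"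
        using f by (simp add: sum_subtractf right_diff_distrib)
      also have "\<dots> \<le> (\<Sum>j\<in>S. \<bar>a j\<bar> * \<delta>)"
        using that by (intro order.trans[OF sum_abs] sum_mono) (simp add: abs_mult mult_left_mono)
      finally show ?thesis
        by (simp add: sum_distrib_right)
    qed
    then show "\<exists>c\<ge>0. \<forall>x y \<delta>. 0 \<le> \<delta> \<longrightarrow> (\<forall>j\<in>S. \<bar>x j - y j\<bar> \<le> \<delta>) \<longrightarrow> \<bar>f i x - f i y\<bar> \<le> c * \<delta>"
      by (intro exI[of _ "\<Sum>j\<in>S. \<bar>a j\<bar>"]) auto
  qed
qed (metis mult_right_mono order_trans)

lemma interval_point_near:
  fixes L U :: "real set"
  assumes "finite L" "finite U" "0 \<le> \<delta>"
    and "\<forall>l\<in>L. \<forall>u\<in>U. l \<le> u"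
    and "\<forall>l\<in>L. l \<le> s + \<delta>" "\<forall>u\<in>U. s - \<delta> \<le> u"
  shows "\<exists>t. (\<forall>l\<in>L. l \<le> t) \<and> (\<forall>u\<in>U. t \<le> u) \<and> \<bar>t - s\<bar> \<le> \<delta>"
proof -
  define m where "m = Max (insert s L)"
  define t where "t = Min (insert m U)"
  have m: "s \<le> m" "m \<le> s + \<delta>" "\<forall>l\<in>L. l \<le> m"
    using assms unfolding m_def by auto
  have "t = m \<or> t \<in> U"
    using Min_in[of "insert m U"] assms(2) unfolding t_def by auto
  moreover have "t \<le> m" "\<forall>u\<in>U. t \<le> u"
    using assms(2) unfolding t_def by auto
  ultimately show ?thesis
    using m assms(4,6) by (intro exI[of _ t]) fastforce
qed

lemma linear_1d_solution_near:
  fixes r a :: "'c \<Rightarrow> real"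
  assumes "finite I" "0 \<le> \<delta>"
    and zero: "\<forall>i\<in>I. a i = 0 \<longrightarrow> r i \<le> 0"
    and pairs: "\<forall>i\<in>I. \<forall>j\<in>I. 0 < a i \<longrightarrow> a j < 0 \<longrightarrow> r i / a i \<le> r j / a j"
    and near: "\<forall>i\<in>I. a i \<noteq> 0 \<longrightarrow> r i + a i * s \<le> \<bar>a i\<bar> * \<delta>"
  shows "\<exists>t. (\<forall>i\<in>I. r i + a i * t \<le> 0) \<and> \<bar>t - s\<bar> \<le> \<delta>"
proof -
  define b where "b i = - r i / a i" for i
  have "\<exists>t. (\<forall>l\<in>b ` {i\<in>I. a i < 0}. l \<le> t) \<and> (\<forall>u\<in>b ` {i\<in>I. 0 < a i}. t \<le> u) \<and> \<bar>t - s\<bar> \<le> \<delta>"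
  proof (rule interval_point_near)
    show "\<forall>l\<in>b ` {i\<in>I. a i < 0}. \<forall>u\<in>b ` {i\<in>I. 0 < a i}. l \<le> u"
      using pairs unfolding b_def by auto
    show "\<forall>l\<in>b ` {i\<in>I. a i < 0}. l \<le> s + \<delta>"
      using near unfolding b_def by clarify (subst divide_le_eq, auto simp: algebra_simps)
    show "\<forall>u\<in>b ` {i\<in>I. 0 < a i}. s - \<delta> \<le> u"
      using near unfolding b_def by clarify (subst le_divide_eq, auto simp: algebra_simps)
  qed (use assms(1,2) in auto)
  then obtain t where lo: "\<forall>i\<in>I. a i < 0 \<longrightarrow> b i \<le> t" and up: "\<forall>i\<in>I. 0 < a i \<longrightarrow> t \<le> b i"
    and "\<bar>t - s\<bar> \<le> \<delta>"
    by auto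
  moreover have "r i + a i * t \<le> 0" if i: "i \<in> I" for i
  proof (cases "a i" "0 :: real" rule: linorder_cases)
    case less
    then show ?thesis
      using lo i unfolding b_def by (subst (asm) divide_le_eq) (auto simp: algebra_simps)
  next
    case greater
    then show ?thesis
      using up i unfolding b_def by (subst (asm) le_divide_eq) (auto simp: algebra_simps)
  qed (use zero i in auto)
  ultimately show ?thesis
    by blast
qed

text \<open>Elimination of the variable \<open>t\<close> from the system \<open>r f x + a f * t \<le> 0\<close> (\<open>f \<in> cs\<close>).\<close>

definition fourier_motzkin ::
  "'c set \<Rightarrow> ('c \<Rightarrow> ('i \<Rightarrow> real) \<Rightarrow> real) \<Rightarrow> ('c \<Rightarrow> real) \<Rightarrow> (('i \<Rightarrow> real) \<Rightarrow> real) set" where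
  "fourier_motzkin cs r a =
     r ` {f\<in>cs. a f = 0} \<union>
     (\<lambda>(f, g) x. r f x / a f - r g x / a g) ` ({f\<in>cs. 0 < a f} \<times> {g\<in>cs. a g < 0})"

lemma finite_fourier_motzkin: "finite cs \<Longrightarrow> finite (fourier_motzkin cs r a)"
  unfolding fourier_motzkin_def by simp

lemma fourier_motzkin_coord_affine:
  "\<forall>f\<in>cs. coord_affine S (r f) \<Longrightarrow> \<forall>h\<in>fourier_motzkin cs r a. coord_affine S h"
  unfolding fourier_motzkin_def by (auto intro!: coord_affine_diff coord_affine_divide)

lemma fourier_motzkin_violation:
  assumes "finite cs"
  shows "\<exists>M\<ge>0. \<forall>x s \<epsilon>. 0 \<le> \<epsilon> \<longrightarrow> (\<forall>f\<in>cs. r f x + a f * s \<le> \<epsilon>) \<longrightarrow>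
           (\<forall>h\<in>fourier_motzkin cs r a. h x \<le> M * \<epsilon>)"
proof -
  have "\<exists>M\<ge>0. \<forall>f\<in>cs. a f \<noteq> 0 \<longrightarrow> 1 / \<bar>a f\<bar> \<le> M"
  proof (rule finite_uniform_bound[OF assms])
    show "\<forall>f\<in>cs. \<exists>M\<ge>0. a f \<noteq> 0 \<longrightarrow> 1 / \<bar>a f\<bar> \<le> M"
    proof
      fix f
      show "\<exists>M\<ge>0. a f \<noteq> 0 \<longrightarrow> 1 / \<bar>a f\<bar> \<le> M"
        by (intro exI[of _ "1 / \<bar>a f\<bar>"]) auto
    qed
  qed auto
  then obtain M where M: "0 \<le> M" "\<forall>f\<in>cs. a f \<noteq> 0 \<longrightarrow> 1 / \<bar>a f\<bar> \<le> M"
    by blast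
  have "h x \<le> (1 + 2 * M) * \<epsilon>"
    if \<epsilon>: "0 \<le> \<epsilon>" and viol: "\<forall>f\<in>cs. r f x + a f * s \<le> \<epsilon>" and h: "h \<in> fourier_motzkin cs r a"
    for x s \<epsilon> h
  proof -
    consider f where "f \<in> cs" "a f = 0" "h = r f"
      | f g where "f \<in> cs" "g \<in> cs" "0 < a f" "a g < 0" "h = (\<lambda>x. r f x / a f - r g x / a g)"
      using h unfolding fourier_motzkin_def by auto
    then show ?thesis
    proof cases
      case 1
      then have "h x \<le> \<epsilon>"
        using viol by auto
      then show ?thesis
        using \<epsilon> M(1) mult_right_mono[of 1 "1 + 2 * M" \<epsilon>] by simp
    next
      case 2
      have "r f x / a f \<le> \<epsilon> / a f - s"
        using divide_right_mono[of "r f x" "\<epsilon> - a f * s" "a f"] viol 2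
        by (simp add: diff_divide_distrib algebra_simps)
      moreover have "\<epsilon> / a g - s \<le> r g x / a g"
        using divide_right_mono_neg[of "r g x" "\<epsilon> - a g * s" "a g"] viol 2
        by (simp add: diff_divide_distrib algebra_simps)
      ultimately have "h x \<le> \<epsilon> / a f - \<epsilon> / a g"
        using 2 by simp
      also have "\<dots> = \<epsilon> * (1 / \<bar>a f\<bar> + 1 / \<bar>a g\<bar>)"
        using 2 by (simp add: field_simps)
      also have "\<dots> \<le> \<epsilon> * (1 + 2 * M)"
      proof -
        have "1 / \<bar>a f\<bar> \<le> M" "1 / \<bar>a g\<bar> \<le> M"
          using M(2) 2 by auto
        then show ?thesis
          using M(1) \<epsilon> by (intro mult_left_mono) auto
      qed
      finally show ?thesis
        by (simp add: mult.commute)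
    qed
  qed
  then show ?thesis
    using M(1) by (intro exI[of _ "1 + 2 * M"]) auto
qed

lemma fourier_motzkin_lift:
  assumes "finite cs" "0 \<le> \<delta>"
    and z: "\<forall>h\<in>fourier_motzkin cs r a. h z \<le> 0"
    and near: "\<forall>f\<in>cs. a f \<noteq> 0 \<longrightarrow> r f z + a f * s \<le> \<bar>a f\<bar> * \<delta>"
  shows "\<exists>t. (\<forall>f\<in>cs. r f z + a f * t \<le> 0) \<and> \<bar>t - s\<bar> \<le> \<delta>"
proof (rule linear_1d_solution_near[OF assms(1,2) _ _ near])
  show "\<forall>f\<in>cs. a f = 0 \<longrightarrow> r f z \<le> 0"
    using z unfolding fourier_motzkin_def by auto
  show "\<forall>f\<in>cs. \<forall>g\<in>cs. 0 < a f \<longrightarrow> a g < 0 \<longrightarrow> r f z / a f \<le> r g z / a g"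
  proof (intro ballI impI)
    fix f g assume "f \<in> cs" "g \<in> cs" "0 < a f" "a g < 0"
    then have "(\<lambda>x. r f x / a f - r g x / a g) \<in> fourier_motzkin cs r a"
      unfolding fourier_motzkin_def by (intro UnI2 image_eqI[of _ _ "(f, g)"]) auto
    then show "r f z / a f \<le> r g z / a g"
      using z by fastforce
  qed
qed

definition error_bound :: "'i set \<Rightarrow> (('i \<Rightarrow> real) \<Rightarrow> real) set \<Rightarrow> real \<Rightarrow> bool" where
  "error_bound S cs C \<longleftrightarrow>
     (\<forall>x \<epsilon>. 0 \<le> \<epsilon> \<longrightarrow> (\<forall>f\<in>cs. f x \<le> \<epsilon>) \<longrightarrow>
        (\<exists>y. (\<forall>f\<in>cs. f y \<le> 0) \<and> (\<forall>j\<in>S. \<bar>x j - y j\<bar> \<le> C * \<epsilon>)))"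

lemma error_bound_fourier_motzkin:
  assumes "k \<notin> S" "finite cs"
    and dec: "\<forall>f\<in>cs. coord_affine S (r f) \<and> (\<forall>x. f x = r f x + a f * x k)"
    and M: "0 \<le> M" "\<forall>x s \<epsilon>. 0 \<le> \<epsilon> \<longrightarrow> (\<forall>f\<in>cs. r f x + a f * s \<le> \<epsilon>) \<longrightarrow>
              (\<forall>h\<in>fourier_motzkin cs r a. h x \<le> M * \<epsilon>)"
    and C: "0 \<le> C" "error_bound S (fourier_motzkin cs r a) C"
  shows "\<exists>C'\<ge>0. error_bound (insert k S) cs C'"
proof -
  obtain c where "0 \<le> c" and lip:
    "\<forall>f\<in>cs. \<forall>x y \<delta>. 0 \<le> \<delta> \<longrightarrow> (\<forall>j\<in>S. \<bar>x j - y j\<bar> \<le> \<delta>) \<longrightarrow> \<bar>r f x - r f y\<bar> \<le> c * \<delta>"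
    using coord_affine_lipschitz[OF assms(2), of S r] dec by blast
  have "\<exists>K\<ge>0. \<forall>f\<in>cs. a f \<noteq> 0 \<longrightarrow> 1 + c * (C * M) \<le> \<bar>a f\<bar> * K"
  proof (rule finite_uniform_bound[OF assms(2)])
    show "\<forall>f\<in>cs. \<exists>K\<ge>0. a f \<noteq> 0 \<longrightarrow> 1 + c * (C * M) \<le> \<bar>a f\<bar> * K"
    proof
      fix f
      show "\<exists>K\<ge>0. a f \<noteq> 0 \<longrightarrow> 1 + c * (C * M) \<le> \<bar>a f\<bar> * K"
        using \<open>0 \<le> c\<close> C(1) M(1) by (intro exI[of _ "(1 + c * (C * M)) / \<bar>a f\<bar>"]) auto
    qed
  qed (metis abs_ge_zero mult_left_mono order_trans)
  then obtain K where "0 \<le> K" and K: "\<forall>f\<in>cs. a f \<noteq> 0 \<longrightarrow> 1 + c * (C * M) \<le> \<bar>a f\<bar> * K"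
    by blast
  have "error_bound (insert k S) cs (C * M + K)"
    unfolding error_bound_def
  proof (intro allI impI)
    fix x :: "'a \<Rightarrow> real" and \<epsilon> :: real
    assume "0 \<le> \<epsilon>" and viol: "\<forall>f\<in>cs. f x \<le> \<epsilon>"
    then have "\<forall>h\<in>fourier_motzkin cs r a. h x \<le> M * \<epsilon>"
      using M(2)[rule_format, where x = x and s = "x k" and \<epsilon> = \<epsilon>] dec by simp
    moreover have "0 \<le> M * \<epsilon>" "0 \<le> K * \<epsilon>" "0 \<le> C * (M * \<epsilon>)"
      using M(1) C(1) \<open>0 \<le> K\<close> \<open>0 \<le> \<epsilon>\<close> by simp_all
    ultimately obtain z where z: "\<forall>h\<in>fourier_motzkin cs r a. h z \<le> 0"
      and zx: "\<forall>j\<in>S. \<bar>x j - z j\<bar> \<le> C * (M * \<epsilon>)"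
      using C(2) unfolding error_bound_def by blast
    have "r f z + a f * x k \<le> \<bar>a f\<bar> * (K * \<epsilon>)" if f: "f \<in> cs" "a f \<noteq> 0" for f
    proof -
      have "\<bar>r f x - r f z\<bar> \<le> c * (C * (M * \<epsilon>))"
        using lip f zx \<open>0 \<le> C * (M * \<epsilon>)\<close> by simp
      moreover have "r f x + a f * x k \<le> \<epsilon>"
        using viol dec f by auto
      moreover have "(1 + c * (C * M)) * \<epsilon> \<le> \<bar>a f\<bar> * K * \<epsilon>"
        using K f \<open>0 \<le> \<epsilon>\<close> by (intro mult_right_mono) auto
      ultimately show ?thesis
        by (simp add: algebra_simps abs_le_iff)
    qed
    then obtain t where t: "\<forall>f\<in>cs. r f z + a f * t \<le> 0" and tx: "\<bar>t - x k\<bar> \<le> K * \<epsilon>"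
      using fourier_motzkin_lift[OF assms(2) \<open>0 \<le> K * \<epsilon>\<close> z] by blast
    have "f (z(k := t)) \<le> 0" if "f \<in> cs" for f
      using dec t that coord_affine_cong[of S "r f" "z(k := t)" z] assms(1) by auto
    moreover have "\<bar>x j - (z(k := t)) j\<bar> \<le> C * (M * \<epsilon>) + K * \<epsilon>" if "j \<in> insert k S" for j
      using that tx zx \<open>0 \<le> K * \<epsilon>\<close> \<open>0 \<le> C * (M * \<epsilon>)\<close> by (auto simp: abs_minus_commute)
    ultimately show "\<exists>y. (\<forall>f\<in>cs. f y \<le> 0) \<and> (\<forall>j\<in>insert k S. \<bar>x j - y j\<bar> \<le> (C * M + K) * \<epsilon>)"
      by (intro exI[of _ "z(k := t)"]) (simp add: algebra_simps)
  qed
  then show ?thesis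
    using C(1) M(1) \<open>0 \<le> K\<close> by (intro exI[of _ "C * M + K"]) auto
qed

theorem hoffman_error_bound:
  assumes "finite S" "finite cs" "\<forall>f\<in>cs. coord_affine S f" "\<exists>y. \<forall>f\<in>cs. f y \<le> 0"
  shows "\<exists>C\<ge>0. error_bound S cs C"
  using assms
proof (induction S arbitrary: cs rule: finite_induct)
  case empty
  then obtain y where y: "\<forall>f\<in>cs. f y \<le> 0"
    by blast
  have "f x = f y" if "f \<in> cs" for f x
    using coord_affine_cong[of "{}" f x y] empty.prems(2) that by simp
  then have "error_bound {} cs 0"
    using y unfolding error_bound_def by fastforce
  then show ?case
    by blast
next
  case (insert k S)
  have "\<forall>f\<in>cs. \<exists>r c. coord_affine S r \<and> (\<forall>x. f x = r x + c * x k)"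
    using coord_affine_insert[OF _ insert.hyps] insert.prems(2) by blast
  then obtain r a where dec: "\<forall>f\<in>cs. coord_affine S (r f) \<and> (\<forall>x. f x = r f x + a f * x k)"
    by metis
  obtain M where M: "0 \<le> M" "\<forall>x s \<epsilon>. 0 \<le> \<epsilon> \<longrightarrow> (\<forall>f\<in>cs. r f x + a f * s \<le> \<epsilon>) \<longrightarrow>
      (\<forall>h\<in>fourier_motzkin cs r a. h x \<le> M * \<epsilon>)"
    using fourier_motzkin_violation[OF insert.prems(1)] by blast
  obtain y where "\<forall>f\<in>cs. f y \<le> 0"
    using insert.prems(3) by blast
  then have "\<forall>f\<in>cs. r f y + a f * y k \<le> 0"
    using dec by simp
  then have "\<forall>h\<in>fourier_motzkin cs r a. h y \<le> 0"
    using M(2)[rule_format, where x = y and s = "y k" and \<epsilon> = 0] by simp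
  moreover have "\<forall>h\<in>fourier_motzkin cs r a. coord_affine S h"
    using dec by (intro fourier_motzkin_coord_affine) blast
  ultimately obtain C where "0 \<le> C" "error_bound S (fourier_motzkin cs r a) C"
    using insert.IH[OF finite_fourier_motzkin[OF insert.prems(1)]] by blast
  then show ?case
    using error_bound_fourier_motzkin[OF insert.hyps(2) insert.prems(1) dec M] by blast
qed

section \<open>Lipschitz bound for convex functions\<close>

lemma strictly_convex_on_imp_convex_on:
  assumes "convex S" "strictly_convex_on S f"
  shows "convex_on S f"
proof (rule convex_onI[OF _ assms(1)])
  fix t x y :: real
  assume t: "0 < t" "t < 1" and "x \<in> S" "y \<in> S"
  show "f ((1 - t) *\<^sub>R x + t *\<^sub>R y) \<le> (1 - t) * f x + t * f y"
  proof (cases "x = y")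
    case True
    then show ?thesis
      by (simp flip: distrib_right)
  next
    case False
    then show ?thesis
      using assms(2) \<open>x \<in> S\<close> \<open>y \<in> S\<close> t unfolding strictly_convex_on_def
      by (force dest: bspec[of _ _ x] bspec[of _ _ y] spec[of _ "1 - t"])
  qed
qed

lemma convex_on_slope_mono:
  fixes f :: "real \<Rightarrow> real"
  assumes "convex_on UNIV f" "a < b" "b \<le> c" "c < d"
  shows "(f b - f a) / (b - a) \<le> (f d - f c) / (d - c)"
proof -
  have swap: "(f p - f q) / (p - q) = (f q - f p) / (q - p)" for p q
    by (metis minus_diff_eq minus_divide_divide)
  have "(f a - f b) / (a - b) \<le> (f a - f d) / (a - d)"
    using convex_on_slope_le(1)[OF assms(1), of a d b] assms by simp
  also have "\<dots> \<le> (f c - f d) / (c - d)"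
    using convex_on_slope_le(2)[OF assms(1), of a d c] assms by simp
  finally show ?thesis
    by (simp only: swap)
qed

lemma convex_on_lipschitz_Icc:
  fixes f :: "real \<Rightarrow> real"
  assumes "convex_on UNIV f" "lo \<le> u" "u \<le> hi" "lo \<le> v" "v \<le> hi"
  shows "\<bar>f v - f u\<bar> \<le> (\<bar>f (hi + 1) - f hi\<bar> + \<bar>f lo - f (lo - 1)\<bar>) * \<bar>v - u\<bar>"
proof -
  define L where "L = \<bar>f (hi + 1) - f hi\<bar> + \<bar>f lo - f (lo - 1)\<bar>"
  have ordered: "\<bar>f q - f p\<bar> \<le> L * (q - p)" if "lo \<le> p" "p < q" "q \<le> hi" for p q
  proof -
    define s where "s = (f q - f p) / (q - p)"
    have "(f lo - f (lo - 1)) / (lo - (lo - 1)) \<le> s"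
      using convex_on_slope_mono[OF assms(1), of "lo - 1" lo p q] that unfolding s_def by simp
    moreover have "s \<le> (f (hi + 1) - f hi) / (hi + 1 - hi)"
      using convex_on_slope_mono[OF assms(1), of p q hi "hi + 1"] that unfolding s_def by simp
    ultimately have "\<bar>s\<bar> \<le> L"
      unfolding L_def by simp
    moreover have "f q - f p = s * (q - p)"
      using that unfolding s_def by simp
    ultimately show ?thesis
      using that by (simp add: abs_mult mult_right_mono)
  qed
  consider "u = v" | "u < v" | "v < u"
    by linarith
  then show ?thesis
    using ordered[of u v] ordered[of v u] assms(2-5)
    by cases (auto simp: L_def abs_minus_commute)
qed

section \<open>The DC-OPF constraints as affine inequalities\<close>

text \<open>A dispatch \<open>(P, \<theta>)\<close> is encoded as the vector \<open>case_sum P \<theta>\<close> over \<open>opf_vars A\<close>; the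
  tieline flows are eliminated through their defining equations, and every equality constraint
  of \<open>feasible\<close> becomes a pair of inequalities.\<close>

definition opf_vars :: "('b, 'g) area \<Rightarrow> ('g + 'b) set" where
  "opf_vars A = Inl ` gens A \<union> Inr ` buses A"

definition tie_flow :: "('b, 'g) area \<Rightarrow> ('b \<Rightarrow> real) \<Rightarrow> ('g + 'b \<Rightarrow> real) \<Rightarrow> 'b \<times> 'b \<Rightarrow> real" where
  "tie_flow A thext x l = (x (Inr (fst l)) - thext (snd l)) / tie_react A l"

definition bus_residual :: "('b, 'g) area \<Rightarrow> ('b \<Rightarrow> real) \<Rightarrow> 'b \<Rightarrow> ('g + 'b \<Rightarrow> real) \<Rightarrow> real" where
  "bus_residual A thext n x =
     (\<Sum>m\<in>buses A. admittance A n m * x (Inr m)) + (\<Sum>l\<in>{l\<in>ties A. fst l = n}. tie_flow A thext x l)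
     - (\<Sum>g\<in>{g\<in>gens A. gbus A g = n}. x (Inl g)) + load A n"

definition opf_constraints :: "('b, 'g) area \<Rightarrow> ('b \<Rightarrow> real) \<Rightarrow> (('g + 'b \<Rightarrow> real) \<Rightarrow> real) set" where
  "opf_constraints A thext =
     bus_residual A thext ` buses A \<union> (\<lambda>n x. - bus_residual A thext n x) ` buses A
     \<union> (\<lambda>g x. pmin A g - x (Inl g)) ` gens A \<union> (\<lambda>g x. x (Inl g) - pmax A g) ` gens A
     \<union> (\<lambda>l x. - flim A l - (x (Inr (fst l)) - x (Inr (snd l))) / react A l) ` lines A
     \<union> (\<lambda>l x. (x (Inr (fst l)) - x (Inr (snd l))) / react A l - flim A l) ` lines A
     \<union> (if is_area1 A then {\<lambda>x. x (Inr (bus1 A)), \<lambda>x. - x (Inr (bus1 A))} else {})"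

lemma finite_opf_vars: "well_formed A \<Longrightarrow> finite (opf_vars A)"
  unfolding opf_vars_def well_formed_def by simp

lemma finite_opf_constraints: "well_formed A \<Longrightarrow> finite (opf_constraints A thext)"
  unfolding opf_constraints_def well_formed_def by auto

lemma tie_flow_coord_affine:
  assumes "well_formed A" "l \<in> ties A"
  shows "coord_affine (opf_vars A) (\<lambda>x. tie_flow A thext x l)"
  using assms finite_opf_vars[OF assms(1)] unfolding tie_flow_def opf_vars_def well_formed_def
  by (intro coord_affine_divide coord_affine_diff coord_affine_const coord_affine_coord) auto

lemma opf_constraints_coord_affine:
  assumes wf: "well_formed A"
  shows "\<forall>f\<in>opf_constraints A thext. coord_affine (opf_vars A) f"
proof -
  have bus: "coord_affine (opf_vars A) (\<lambda>x. x (Inr n))" if "n \<in> buses A" for n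
    using coord_affine_coord[OF finite_opf_vars[OF wf], of "Inr n"] that unfolding opf_vars_def by simp
  have gen: "coord_affine (opf_vars A) (\<lambda>x. x (Inl g))" if "g \<in> gens A" for g
    using coord_affine_coord[OF finite_opf_vars[OF wf], of "Inl g"] that unfolding opf_vars_def by simp
  have "coord_affine (opf_vars A) (bus_residual A thext n)" for n
    unfolding bus_residual_def using wf unfolding well_formed_def
    by (intro coord_affine_add coord_affine_diff coord_affine_sum coord_affine_const ballI
        coord_affine_scale tie_flow_coord_affine[OF wf] bus gen) auto
  moreover have "fst l \<in> buses A" "snd l \<in> buses A" if "l \<in> lines A" for l
    using wf that unfolding well_formed_def by auto
  moreover have "bus1 A \<in> buses A"
    using wf unfolding well_formed_def by auto
  ultimately show ?thesis
    unfolding opf_constraints_def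
    by (auto intro!: coord_affine_diff coord_affine_uminus coord_affine_divide coord_affine_const bus gen)
qed

lemma feasible_imp_opf_constraints:
  assumes "feasible A thext P \<theta> T"
  shows "\<forall>l\<in>ties A. T l = tie_flow A thext (case_sum P \<theta>) l"
    and "\<forall>f\<in>opf_constraints A thext. f (case_sum P \<theta>) \<le> 0"
proof -
  note F = assms[unfolded feasible_def]
  show T: "\<forall>l\<in>ties A. T l = tie_flow A thext (case_sum P \<theta>) l"
    using F unfolding tie_flow_def by auto
  have "bus_residual A thext n (case_sum P \<theta>) = 0" if "n \<in> buses A" for n
  proof -
    have "(\<Sum>l\<in>{l\<in>ties A. fst l = n}. T l) = (\<Sum>l\<in>{l\<in>ties A. fst l = n}. tie_flow A thext (case_sum P \<theta>) l)"
      using T by (intro sum.cong) auto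
    then show ?thesis
      using F that unfolding bus_residual_def by auto
  qed
  then show "\<forall>f\<in>opf_constraints A thext. f (case_sum P \<theta>) \<le> 0"
    unfolding opf_constraints_def using F by auto
qed

lemma opf_constraints_imp_feasible:
  assumes "\<forall>f\<in>opf_constraints A thext. f x \<le> 0"
  shows "feasible A thext (\<lambda>g. x (Inl g)) (\<lambda>n. x (Inr n)) (tie_flow A thext x)"
proof -
  have le: "f x \<le> 0" if "f \<in> opf_constraints A thext" for f
    using assms that by blast
  have "bus_residual A thext n x \<le> 0" "- bus_residual A thext n x \<le> 0" if "n \<in> buses A" for n
    using le[of "bus_residual A thext n"] le[of "\<lambda>x. - bus_residual A thext n x"] that
    unfolding opf_constraints_def by auto
  moreover have "pmin A g - x (Inl g) \<le> 0" "x (Inl g) - pmax A g \<le> 0" if "g \<in> gens A" for g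
    using le[of "\<lambda>x. pmin A g - x (Inl g)"] le[of "\<lambda>x. x (Inl g) - pmax A g"] that
    unfolding opf_constraints_def by auto
  moreover have "- flim A l - (x (Inr (fst l)) - x (Inr (snd l))) / react A l \<le> 0"
    "(x (Inr (fst l)) - x (Inr (snd l))) / react A l - flim A l \<le> 0" if "l \<in> lines A" for l
    using le[of "\<lambda>x. - flim A l - (x (Inr (fst l)) - x (Inr (snd l))) / react A l"]
      le[of "\<lambda>x. (x (Inr (fst l)) - x (Inr (snd l))) / react A l - flim A l"] that
    unfolding opf_constraints_def by auto
  moreover have "x (Inr (bus1 A)) \<le> 0" "- x (Inr (bus1 A)) \<le> 0" if "is_area1 A"
    using le[of "\<lambda>x. x (Inr (bus1 A))"] le[of "\<lambda>x. - x (Inr (bus1 A))"] that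
    unfolding opf_constraints_def by auto
  ultimately show ?thesis
    unfolding feasible_def bus_residual_def tie_flow_def by fastforce
qed

lemma tie_flow_dist:
  assumes "well_formed A" "l \<in> ties A" "\<forall>j\<in>opf_vars A. \<bar>x j - y j\<bar> \<le> \<delta>"
  shows "\<bar>tie_flow A thext y l - tie_flow A thext x l\<bar> \<le> \<delta> / tie_react A l"
proof -
  have "fst l \<in> buses A" "0 < tie_react A l"
    using assms(1,2) unfolding well_formed_def by auto
  then have "\<bar>y (Inr (fst l)) - x (Inr (fst l))\<bar> \<le> \<delta>"
    using assms(3) unfolding opf_vars_def by (auto simp: abs_minus_commute)
  then show ?thesis
    using \<open>0 < tie_react A l\<close> unfolding tie_flow_def
    by (simp add: abs_div divide_right_mono flip: diff_divide_distrib)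
qed

definition tie_zero_constraints ::
  "('b, 'g) area \<Rightarrow> ('b \<Rightarrow> real) \<Rightarrow> 'b \<times> 'b \<Rightarrow> (('g + 'b \<Rightarrow> real) \<Rightarrow> real) set" where
  "tie_zero_constraints A thext e =
     opf_constraints A thext \<union> {\<lambda>x. tie_flow A thext x e, \<lambda>x. - tie_flow A thext x e}"

definition tie_zero_within :: "('b, 'g) area \<Rightarrow> ('b \<Rightarrow> real) \<Rightarrow> 'b \<times> 'b \<Rightarrow> real \<Rightarrow> bool" where
  "tie_zero_within A thext e C \<longleftrightarrow>
     (\<forall>P \<theta> T. feasible A thext P \<theta> T \<longrightarrow>
        (\<exists>P' \<theta>' T'. feasible A thext P' \<theta>' T' \<and> T' e = 0 \<and>
           (\<forall>g\<in>gens A. \<bar>P' g - P g\<bar> \<le> C * \<bar>T e\<bar>) \<and>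
           (\<forall>l\<in>ties A. \<bar>T' l - T l\<bar> \<le> C * \<bar>T e\<bar> / tie_react A l)))"

lemma error_bound_imp_tie_zero_within:
  assumes wf: "well_formed A" and e: "e \<in> ties A"
    and C: "error_bound (opf_vars A) (tie_zero_constraints A thext e) C"
  shows "tie_zero_within A thext e C"
  unfolding tie_zero_within_def
proof (intro allI impI)
  fix P \<theta> T
  assume fe: "feasible A thext P \<theta> T"
  have T: "\<forall>l\<in>ties A. T l = tie_flow A thext (case_sum P \<theta>) l"
    using feasible_imp_opf_constraints(1)[OF fe] .
  have "\<forall>f\<in>opf_constraints A thext. f (case_sum P \<theta>) \<le> \<bar>T e\<bar>"
    using feasible_imp_opf_constraints(2)[OF fe] by (meson abs_ge_zero order_trans)
  moreover have "tie_flow A thext (case_sum P \<theta>) e = T e"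
    using T e by simp
  ultimately have "\<forall>f\<in>tie_zero_constraints A thext e. f (case_sum P \<theta>) \<le> \<bar>T e\<bar>"
    unfolding tie_zero_constraints_def by auto
  then obtain y where y: "\<forall>f\<in>tie_zero_constraints A thext e. f y \<le> 0"
    and dist: "\<forall>j\<in>opf_vars A. \<bar>case_sum P \<theta> j - y j\<bar> \<le> C * \<bar>T e\<bar>"
    using C abs_ge_zero[of "T e"] unfolding error_bound_def by blast
  have "feasible A thext (\<lambda>g. y (Inl g)) (\<lambda>n. y (Inr n)) (tie_flow A thext y)"
    using y unfolding tie_zero_constraints_def by (intro opf_constraints_imp_feasible) blast
  moreover have "tie_flow A thext y e \<le> 0" "- tie_flow A thext y e \<le> 0"
    using y unfolding tie_zero_constraints_def by auto
  moreover have "\<bar>y (Inl g) - P g\<bar> \<le> C * \<bar>T e\<bar>" if "g \<in> gens A" for g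
    using dist[rule_format, of "Inl g"] that unfolding opf_vars_def by (simp add: abs_minus_commute)
  moreover have "\<bar>tie_flow A thext y l - T l\<bar> \<le> C * \<bar>T e\<bar> / tie_react A l" if "l \<in> ties A" for l
    using tie_flow_dist[OF wf that dist] T that by simp
  ultimately show "\<exists>P' \<theta>' T'. feasible A thext P' \<theta>' T' \<and> T' e = 0 \<and>
      (\<forall>g\<in>gens A. \<bar>P' g - P g\<bar> \<le> C * \<bar>T e\<bar>) \<and> (\<forall>l\<in>ties A. \<bar>T' l - T l\<bar> \<le> C * \<bar>T e\<bar> / tie_react A l)"
    by (intro exI[of _ "\<lambda>g. y (Inl g)"] exI[of _ "\<lambda>n. y (Inr n)"] exI[of _ "tie_flow A thext y"]) auto
qed

lemma ex_tie_zero_within: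
  assumes wf: "well_formed A" and e: "e \<in> ties A"
    and feas0: "\<exists>P \<theta> T. feasible A thext P \<theta> T \<and> T e = 0"
  shows "\<exists>C\<ge>0. tie_zero_within A thext e C"
proof -
  have "\<forall>f\<in>tie_zero_constraints A thext e. coord_affine (opf_vars A) f"
    using opf_constraints_coord_affine[OF wf] tie_flow_coord_affine[OF wf e]
      coord_affine_uminus[OF tie_flow_coord_affine[OF wf e]]
    unfolding tie_zero_constraints_def by blast
  moreover have "\<exists>y. \<forall>f\<in>tie_zero_constraints A thext e. f y \<le> 0"
  proof -
    obtain P \<theta> T where fe: "feasible A thext P \<theta> T" and "T e = 0"
      using feas0 by blast
    then have "tie_flow A thext (case_sum P \<theta>) e = 0"
      using feasible_imp_opf_constraints(1)[OF fe] e by simp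
    then show ?thesis
      using feasible_imp_opf_constraints(2)[OF fe] unfolding tie_zero_constraints_def
      by (intro exI[of _ "case_sum P \<theta>"]) auto
  qed
  moreover have "finite (tie_zero_constraints A thext e)"
    using finite_opf_constraints[OF wf] unfolding tie_zero_constraints_def by simp
  ultimately obtain C where "0 \<le> C" "error_bound (opf_vars A) (tie_zero_constraints A thext e) C"
    using hoffman_error_bound[OF finite_opf_vars[OF wf]] by blast
  then show ?thesis
    using error_bound_imp_tie_zero_within[OF wf e] by blast
qed

section \<open>Exact penalty\<close>

definition objective_lipschitz :: "('b, 'g) area \<Rightarrow> ('b \<Rightarrow> real) \<Rightarrow> ('b \<times> 'b \<Rightarrow> real) \<Rightarrow> real" where
  "objective_lipschitz A alpha mu =
     (\<Sum>g\<in>gens A. \<bar>cost A g (pmax A g + 1) - cost A g (pmax A g)\<bar>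
                  + \<bar>cost A g (pmin A g) - cost A g (pmin A g - 1)\<bar>)
     + (\<Sum>l\<in>ties A. (\<bar>alpha (snd l)\<bar> + mu l / 2) / tie_react A l)"

lemma objective_lipschitz_nonneg:
  assumes "well_formed A" "\<forall>l\<in>ties A. 0 \<le> mu l"
  shows "0 \<le> objective_lipschitz A alpha mu"
  using assms unfolding objective_lipschitz_def well_formed_def
  by (intro add_nonneg_nonneg sum_nonneg divide_nonneg_pos) auto

lemma objective_diff_le:
  assumes wf: "well_formed A" and mu: "\<forall>l\<in>ties A. 0 \<le> mu l"
    and fe: "feasible A thext P \<theta> T" and fe': "feasible A thext P' \<theta>' T'"
    and dP: "\<forall>g\<in>gens A. \<bar>P' g - P g\<bar> \<le> \<delta>"
    and dT: "\<forall>l\<in>ties A. \<bar>T' l - T l\<bar> \<le> \<delta> / tie_react A l"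
  shows "objective A alpha mu P' T' - objective A alpha mu P T \<le> objective_lipschitz A alpha mu * \<delta>"
proof -
  define Lg where "Lg g = \<bar>cost A g (pmax A g + 1) - cost A g (pmax A g)\<bar>
    + \<bar>cost A g (pmin A g) - cost A g (pmin A g - 1)\<bar>" for g
  define tie where "tie T l = mu l / 2 * (\<bar>T l\<bar> - tie_cap A l) - alpha (snd l) * T l"
    for T l
  have objective: "objective A alpha mu P T = (\<Sum>g\<in>gens A. cost A g (P g)) + (\<Sum>l\<in>ties A. tie T l)"
    for P T
    unfolding objective_def tie_def by (simp add: sum_subtractf case_prod_beta)
  have "cost A g (P' g) - cost A g (P g) \<le> Lg g * \<delta>" if g: "g \<in> gens A" for g
  proof -
    have "convex_on UNIV (cost A g)"
      using wf g unfolding well_formed_def by (auto intro: strictly_convex_on_imp_convex_on)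
    then have "\<bar>cost A g (P' g) - cost A g (P g)\<bar> \<le> Lg g * \<bar>P' g - P g\<bar>"
      using fe fe' g unfolding feasible_def Lg_def by (intro convex_on_lipschitz_Icc) auto
    also have "\<dots> \<le> Lg g * \<delta>"
      using dP g by (intro mult_left_mono) (auto simp: Lg_def)
    finally show ?thesis
      by linarith
  qed
  moreover have "tie T' l - tie T l \<le> (\<bar>alpha (snd l)\<bar> + mu l / 2) / tie_react A l * \<delta>"
    if l: "l \<in> ties A" for l
  proof -
    have "tie T' l - tie T l = mu l / 2 * (\<bar>T' l\<bar> - \<bar>T l\<bar>) + - alpha (snd l) * (T' l - T l)"
      unfolding tie_def by (simp add: algebra_simps)
    also have "\<dots> \<le> mu l / 2 * \<bar>T' l - T l\<bar> + \<bar>alpha (snd l)\<bar> * \<bar>T' l - T l\<bar>"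
      using mu l abs_ge_self[of "- alpha (snd l) * (T' l - T l)"]
      by (intro add_mono mult_left_mono) (auto simp: abs_mult)
    also have "\<dots> = (\<bar>alpha (snd l)\<bar> + mu l / 2) * \<bar>T' l - T l\<bar>"
      by (simp add: algebra_simps)
    also have "\<dots> \<le> (\<bar>alpha (snd l)\<bar> + mu l / 2) * (\<delta> / tie_react A l)"
      using dT mu l by (intro mult_left_mono) auto
    finally show ?thesis
      by simp
  qed
  ultimately have "(\<Sum>g\<in>gens A. cost A g (P' g) - cost A g (P g)) + (\<Sum>l\<in>ties A. tie T' l - tie T l)
      \<le> (\<Sum>g\<in>gens A. Lg g * \<delta>) + (\<Sum>l\<in>ties A. (\<bar>alpha (snd l)\<bar> + mu l / 2) / tie_react A l * \<delta>)"
    by (intro add_mono sum_mono) auto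
  then show ?thesis
    unfolding objective objective_lipschitz_def Lg_def[symmetric]
    by (simp add: sum_subtractf distrib_right sum_distrib_right)
qed

lemma objective_fun_upd_price:
  assumes "finite (ties A)" "e \<in> ties A"
  shows "objective A alpha (mu(e := m)) P T
    = objective A alpha (mu(e := 0)) P T + m / 2 * (\<bar>T e\<bar> - tie_cap A e)"
  using assms unfolding objective_def by (simp add: sum.remove)

lemma optimal_tie_zero:
  assumes wf: "well_formed A" and mu: "\<forall>l\<in>ties A. 0 \<le> mu l" and e: "e \<in> ties A"
    and C: "tie_zero_within A thext e C"
    and opt: "optimal A alpha thext (mu(e := m)) P \<theta> T"
    and m: "2 * objective_lipschitz A alpha (mu(e := 0)) * C < m"
  shows "T e = 0"
proof -
  define L where "L = objective_lipschitz A alpha (mu(e := 0))"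
  have mu0: "\<forall>l\<in>ties A. 0 \<le> (mu(e := 0)) l"
    using mu by simp
  obtain P' \<theta>' T' where fe': "feasible A thext P' \<theta>' T'" and "T' e = 0"
    and close: "\<forall>g\<in>gens A. \<bar>P' g - P g\<bar> \<le> C * \<bar>T e\<bar>"
      "\<forall>l\<in>ties A. \<bar>T' l - T l\<bar> \<le> C * \<bar>T e\<bar> / tie_react A l"
    using C opt unfolding tie_zero_within_def optimal_def by blast
  have "finite (ties A)"
    using wf unfolding well_formed_def by simp
  have "objective A alpha (mu(e := m)) P T \<le> objective A alpha (mu(e := m)) P' T'"
    using opt fe' unfolding optimal_def by blast
  then have "m / 2 * \<bar>T e\<bar> \<le> objective A alpha (mu(e := 0)) P' T' - objective A alpha (mu(e := 0)) P T"
    using objective_fun_upd_price[OF \<open>finite (ties A)\<close> e, of alpha mu m P T]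
      objective_fun_upd_price[OF \<open>finite (ties A)\<close> e, of alpha mu m P' T'] \<open>T' e = 0\<close>
    by (simp add: algebra_simps)
  also have "\<dots> \<le> L * (C * \<bar>T e\<bar>)"
    unfolding L_def using opt fe' close unfolding optimal_def
    by (intro objective_diff_le[OF wf mu0]) auto
  finally have "(m - 2 * L * C) * \<bar>T e\<bar> \<le> 0"
    by (simp add: algebra_simps)
  moreover have "0 < m - 2 * L * C"
    using m unfolding L_def by simp
  ultimately show ?thesis
    by (simp add: mult_le_0_iff)
qed

theorem proposition2:
  fixes A :: "('b, 'g) area"
    and alpha thext :: "'b \<Rightarrow> real"
    and mu :: "'b \<times> 'b \<Rightarrow> real"
  assumes wf: "well_formed A"
    and mu_nonneg: "\<forall>l\<in>ties A. mu l \<ge> 0"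
    and feas0: "\<exists>P \<theta> T. feasible A thext P \<theta> T \<and> (\<forall>l\<in>ties A. T l = 0)"
  shows "\<forall>e\<in>ties A. \<exists>mubar > 0. \<forall>m \<ge> mubar. \<forall>P \<theta> T.
           optimal A alpha thext (mu(e := m)) P \<theta> T \<longrightarrow> T e = 0"
proof
  fix e assume e: "e \<in> ties A"
  obtain C where "0 \<le> C" and C: "tie_zero_within A thext e C"
    using ex_tie_zero_within[OF wf e] feas0 e by blast
  define L where "L = objective_lipschitz A alpha (mu(e := 0))"
  have "0 \<le> L"
    unfolding L_def using mu_nonneg by (intro objective_lipschitz_nonneg[OF wf]) simp
  then have "0 < 2 * L * C + 1"
    using \<open>0 \<le> C\<close> by (simp add: add_nonneg_pos)
  moreover have "T e = 0" if "2 * L * C + 1 \<le> m" "optimal A alpha thext (mu(e := m)) P \<theta> T" for m P \<theta> T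
    using optimal_tie_zero[OF wf mu_nonneg e C that(2)] that(1) unfolding L_def by simp
  ultimately show "\<exists>mubar > 0. \<forall>m \<ge> mubar. \<forall>P \<theta> T. optimal A alpha thext (mu(e := m)) P \<theta> T \<longrightarrow> T e = 0"
    by blast
qed

end
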